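(* Let $f:\mathbb{N}^d\to\mathbb{N}$. If there exists an increasing (in the componentwise order) sequence $(\vec{a}_1,\vec{a}_2,\ldots)$ of elements of $\mathbb{N}^d$ such that for all $i<j$ there exists some $\vec{\Delta}_{ij}\in\mathbb{N}^d$ with $f(\vec{a}_i+\vec{\Delta}_{ij})-f(\vec{a}_i)>f(\vec{a}_j+\vec{\Delta}_{ij})-f(\vec{a}_j)$, then $f$ is not obliviously-computable.
   Context: A chemical reaction network (CRN) is a pair $(\mathcal{S},\mathcal{R})$ of a finite set of species and a finite set of reactions $(\vec{R},\vec{P})\in\mathbb{N}^{\mathcal{S}}\times\mathbb{N}^{\mathcal{S}}$. A configuration is $\vec{C}\in\mathbb{N}^{\mathcal{S}}$; a reaction is applicable if $\vec{R}\le\vec{C}$ and yields $\vec{C}-\vec{R}+\vec{P}$; reachability is via finite sequences of applicable reactions. To compute $f:\mathbb{N}^d\to\mathbb{N}$ the CRN has input species $X_1,\ldots,X_d$, output species $Y$, leader species $L$; the initial configuration $\vec{I}_{\vec{x}}$ has $\vec{x}(i)$ copies of $X_i$, one $L$, nothing else. $\vec{C}$ is stable if all configurations reachable from it have the same count of $Y$. The CRN stably computes $f$ if for every $\vec{x}$ and every $\vec{C}$ reachable from $\vec{I}_{\vec{x}}$ some stable $\vec{O}$ reachable from $\vec{C}$ has $\vec{O}(Y)=f(\vec{x})$. The CRN is output-oblivious if $Y$ is never a reactant. $f$ is obliviously-computable if stably computed by an output-oblivious CRN. *)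

theory Defs
  imports Main
begin

definition natvec :: "nat \<Rightarrow> (nat \<Rightarrow> nat) set" where
  "natvec d = {x. \<forall>i\<ge>d. x i = 0}"

(* A CRN over species type 'a, with its input/output/leader species.
   Configurations are 'a => nat (counts; zero outside the species set). *)
record 'a crn =
  species   :: "'a set"
  reactions :: "(('a \<Rightarrow> nat) \<times> ('a \<Rightarrow> nat)) set"
  inp       :: "nat \<Rightarrow> 'a"     (* X_1..X_d are inp 0 .. inp (d-1) *)
  outp      :: "'a"
  leader    :: "'a"

definition wf_crn :: "'a crn \<Rightarrow> nat \<Rightarrow> bool" where
  "wf_crn N d \<longleftrightarrow>
     finite (species N) \<and> finite (reactions N) \<and>
     (\<forall>(R, P) \<in> reactions N. \<forall>s. s \<notin> species N \<longrightarrow> R s = 0 \<and> P s = 0) \<and>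
     inp N ` {..<d} \<subseteq> species N \<and> outp N \<in> species N \<and> leader N \<in> species N \<and>
     inj_on (inp N) {..<d} \<and> outp N \<notin> inp N ` {..<d} \<and>
     leader N \<notin> inp N ` {..<d} \<and> outp N \<noteq> leader N"

definition crn_step :: "'a crn \<Rightarrow> ('a \<Rightarrow> nat) \<Rightarrow> ('a \<Rightarrow> nat) \<Rightarrow> bool" where
  "crn_step N C C' \<longleftrightarrow>
     (\<exists>(R, P) \<in> reactions N. R \<le> C \<and> C' = (\<lambda>s. C s - R s + P s))"

definition reachable :: "'a crn \<Rightarrow> ('a \<Rightarrow> nat) \<Rightarrow> ('a \<Rightarrow> nat) \<Rightarrow> bool" where
  "reachable N = (crn_step N)\<^sup>*\<^sup>*"

definition init_config :: "'a crn \<Rightarrow> nat \<Rightarrow> (nat \<Rightarrow> nat) \<Rightarrow> ('a \<Rightarrow> nat)" where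
  "init_config N d x = (\<lambda>s. (\<Sum>i<d. if s = inp N i then x i else 0) + (if s = leader N then 1 else 0))"

definition stable_config :: "'a crn \<Rightarrow> ('a \<Rightarrow> nat) \<Rightarrow> bool" where
  "stable_config N C \<longleftrightarrow> (\<forall>C'. reachable N C C' \<longrightarrow> C' (outp N) = C (outp N))"

definition stably_computes :: "'a crn \<Rightarrow> nat \<Rightarrow> ((nat \<Rightarrow> nat) \<Rightarrow> nat) \<Rightarrow> bool" where
  "stably_computes N d f \<longleftrightarrow>
     (\<forall>x \<in> natvec d. \<forall>C. reachable N (init_config N d x) C \<longrightarrow>
        (\<exists>E. reachable N C E \<and> stable_config N E \<and> E (outp N) = f x))"

definition output_oblivious :: "'a crn \<Rightarrow> bool" where
  "output_oblivious N \<longleftrightarrow> (\<forall>(R, P) \<in> reactions N. R (outp N) = 0)"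

definition obliviously_computes :: "'a crn \<Rightarrow> nat \<Rightarrow> ((nat \<Rightarrow> nat) \<Rightarrow> nat) \<Rightarrow> bool" where
  "obliviously_computes N d f \<longleftrightarrow> wf_crn N d \<and> output_oblivious N \<and> stably_computes N d f"

end

theory Submission
  imports Defs Complex_Main
begin

(* An output-oblivious CRN can never consume Y, so the output count only grows,
   and adding molecules to a configuration never disables a run.  Run the CRN from the
   inputs a_i to configurations O_i with exactly f(a_i) copies of Y.  By Dickson's lemma
   O_i <= O_j for some i < j.  Adding the input D and completing the computation from
   O_i + D produces f(a_i + D) - f(a_i) new copies of Y; replaying that run from
   O_j + D = (O_i + D) + (O_j - O_i) produces just as many, and since they are never
   consumed, f(a_j + D) - f(a_j) >= f(a_i + D) - f(a_i), contradicting the choice of D. *)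

lemma wellorder_incseq_subseq:
  fixes h :: "nat \<Rightarrow> 'b::wellorder"
  shows "\<exists>\<psi>. strict_mono \<psi> \<and> incseq (\<lambda>n. h (\<psi> n))"
proof -
  obtain \<sigma> where \<sigma>: "strict_mono \<sigma>" and "monoseq (\<lambda>n. h (\<sigma> n))"
    using seq_monosub by blast
  then consider "incseq (\<lambda>n. h (\<sigma> n))" | "decseq (\<lambda>n. h (\<sigma> n))"
    using monoseq_iff by blast
  then show ?thesis
  proof cases
    case 1
    with \<sigma> show ?thesis by blast
  next
    case dec: 2
    \<comment> \<open>a decreasing sequence stays at its minimum once it attains it\<close>
    obtain k where "h (\<sigma> k) = (LEAST v. v \<in> range (\<lambda>n. h (\<sigma> n)))"
      using LeastI[of "\<lambda>v. v \<in> range (\<lambda>n. h (\<sigma> n))" "h (\<sigma> 0)"] by auto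
    then have k: "h (\<sigma> k) \<le> h (\<sigma> n)" for n
      using Least_le[of "\<lambda>v. v \<in> range (\<lambda>n. h (\<sigma> n))" "h (\<sigma> n)"] by simp
    have "h (\<sigma> (n + k)) = h (\<sigma> k)" for n
      using dec k[of "n + k"] unfolding decseq_def by (metis antisym le_add2)
    moreover have "strict_mono (\<lambda>n. \<sigma> (n + k))"
      using \<sigma> by (simp add: strict_mono_def)
    ultimately show ?thesis
      by (intro exI[of _ "\<lambda>n. \<sigma> (n + k)"]) (simp add: incseq_def)
  qed
qed

lemma dickson_subseq:
  fixes g :: "nat \<Rightarrow> 'a \<Rightarrow> 'b::wellorder"
  assumes "finite S"
  shows "\<exists>\<phi>. strict_mono \<phi> \<and> (\<forall>s\<in>S. incseq (\<lambda>n. g (\<phi> n) s))"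
  using assms
proof (induction S rule: finite_induct)
  case empty
  show ?case
    by (intro exI[of _ "\<lambda>n. n"]) (simp add: strict_mono_def)
next
  case (insert x S)
  then obtain \<phi> where \<phi>: "strict_mono \<phi>" "\<forall>s\<in>S. incseq (\<lambda>n. g (\<phi> n) s)"
    by blast
  obtain \<psi> where \<psi>: "strict_mono \<psi>" "incseq (\<lambda>n. g (\<phi> (\<psi> n)) x)"
    using wellorder_incseq_subseq[of "\<lambda>n. g (\<phi> n) x"] by blast
  have "incseq (\<lambda>n. g (\<phi> (\<psi> n)) s)" if "s \<in> S" for s
  proof (rule incseq_SucI)
    fix n
    have "incseq (\<lambda>n. g (\<phi> n) s)"
      using \<phi>(2) that by blast
    moreover have "\<psi> n \<le> \<psi> (Suc n)"
      using \<psi>(1) by (simp add: strict_mono_less_eq)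
    ultimately show "g (\<phi> (\<psi> n)) s \<le> g (\<phi> (\<psi> (Suc n))) s"
      by (rule incseqD)
  qed
  with \<psi>(2) have "\<forall>s\<in>insert x S. incseq (\<lambda>n. g ((\<phi> \<circ> \<psi>) n) s)"
    by simp
  with strict_mono_o[OF \<phi>(1) \<psi>(1)] show ?case
    by blast
qed

lemma dickson_pair:
  fixes g :: "nat \<Rightarrow> 'a \<Rightarrow> 'b::wellorder"
  assumes "finite S"
  shows "\<exists>i j. i < j \<and> (\<forall>s\<in>S. g i s \<le> g j s)"
proof -
  obtain \<phi> where \<phi>: "strict_mono \<phi>" "\<forall>s\<in>S. incseq (\<lambda>n. g (\<phi> n) s)"
    using dickson_subseq[OF assms] by blast
  have "\<phi> 0 < \<phi> 1"
    using \<phi>(1) by (simp add: strict_mono_less)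
  moreover have "g (\<phi> 0) s \<le> g (\<phi> 1) s" if "s \<in> S" for s
    using incseq_SucD[of "\<lambda>n. g (\<phi> n) s" 0] \<phi>(2) that by simp
  ultimately show ?thesis
    by blast
qed

lemma crn_stepE:
  assumes "crn_step N C C'"
  obtains R P where "(R, P) \<in> reactions N" "R \<le> C" "C' = (\<lambda>s. C s - R s + P s)"
  using assms unfolding crn_step_def by blast

lemma reachable_refl: "reachable N C C"
  unfolding reachable_def by simp

lemma reachable_trans:
  "reachable N C C' \<Longrightarrow> reachable N C' C'' \<Longrightarrow> reachable N C C''"
  unfolding reachable_def by (rule rtranclp_trans)

lemma reachable_preserves_support:
  assumes "wf_crn N d" "reachable N C C'" "\<forall>s. s \<notin> species N \<longrightarrow> C s = 0"
  shows "\<forall>s. s \<notin> species N \<longrightarrow> C' s = 0"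
  using assms(2,3) unfolding reachable_def
proof (induction rule: rtranclp_induct)
  case (step C1 C2)
  then obtain R P where "(R, P) \<in> reactions N" "C2 = (\<lambda>s. C1 s - R s + P s)"
    by (blast elim: crn_stepE)
  moreover have "\<forall>s. s \<notin> species N \<longrightarrow> R s = 0 \<and> P s = 0"
    using assms(1) calculation(1) unfolding wf_crn_def by blast
  ultimately show ?case
    using step.IH step.prems by simp
qed simp

lemma reachable_add:
  assumes "reachable N C C'"
  shows "reachable N (\<lambda>s. C s + E s) (\<lambda>s. C' s + E s)"
  using assms unfolding reachable_def
proof (induction rule: rtranclp_induct)
  case (step C1 C2)
  then obtain R P where RP: "(R, P) \<in> reactions N" "R \<le> C1" "C2 = (\<lambda>s. C1 s - R s + P s)"
    by (blast elim: crn_stepE)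
  have "crn_step N (\<lambda>s. C1 s + E s) (\<lambda>s. C2 s + E s)"
    unfolding crn_step_def using RP
    by (intro bexI[of _ "(R, P)"]) (auto simp: le_fun_def trans_le_add1)
  with step.IH show ?case
    by (simp add: rtranclp.rtrancl_into_rtrancl)
qed simp

lemma reachable_output_mono:
  assumes "output_oblivious N" "reachable N C C'"
  shows "C (outp N) \<le> C' (outp N)"
  using assms(2) unfolding reachable_def
proof (induction rule: rtranclp_induct)
  case (step C1 C2)
  then obtain R P where "(R, P) \<in> reactions N" "C2 = (\<lambda>s. C1 s - R s + P s)"
    by (blast elim: crn_stepE)
  moreover have "R (outp N) = 0"
    using assms(1) calculation(1) unfolding output_oblivious_def by blast
  ultimately show ?case
    using step.IH by simp
qed simp

lemma init_config_support:
  assumes "wf_crn N d" "s \<notin> species N"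
  shows "init_config N d x s = 0"
  using assms unfolding wf_crn_def init_config_def by (auto intro!: sum.neutral)

lemma reachable_from_init_config_support:
  assumes "wf_crn N d" "reachable N (init_config N d x) C" "s \<notin> species N"
  shows "C s = 0"
proof -
  have "\<forall>s. s \<notin> species N \<longrightarrow> init_config N d x s = 0"
    using init_config_support[OF assms(1)] by blast
  with reachable_preserves_support[OF assms(1,2)] assms(3) show ?thesis
    by blast
qed

lemma init_config_add:
  "init_config N d (\<lambda>k. x k + y k) =
     (\<lambda>s. init_config N d x s + (\<Sum>k<d. if s = inp N k then y k else 0))"
proof
  fix s
  have "(\<Sum>k<d. if s = inp N k then x k + y k else 0) =
      (\<Sum>k<d. if s = inp N k then x k else 0) + (\<Sum>k<d. if s = inp N k then y k else 0)"
    unfolding sum.distrib[symmetric] by (rule sum.cong) auto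
  then show "init_config N d (\<lambda>k. x k + y k) s =
      init_config N d x s + (\<Sum>k<d. if s = inp N k then y k else 0)"
    unfolding init_config_def by linarith
qed

lemma natvec_add: "x \<in> natvec d \<Longrightarrow> y \<in> natvec d \<Longrightarrow> (\<lambda>k. x k + y k) \<in> natvec d"
  unfolding natvec_def by simp

lemma stably_computesE:
  assumes "stably_computes N d f" "x \<in> natvec d" "reachable N (init_config N d x) C"
  obtains E where "reachable N C E" "E (outp N) = f x"
  using assms unfolding stably_computes_def by blast

lemma obliviously_computes_increment_mono:
  assumes oc: "obliviously_computes N d f"
    and nv: "x \<in> natvec d" "x' \<in> natvec d" "D \<in> natvec d"
    and run: "reachable N (init_config N d x) C" "reachable N (init_config N d x') C'"
    and le: "C \<le> C'"
    and out: "C (outp N) = f x" "C' (outp N) = f x'"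
  shows "int (f (\<lambda>k. x k + D k)) - int (f x) \<le> int (f (\<lambda>k. x' k + D k)) - int (f x')"
proof -
  have oo: "output_oblivious N" and sc: "stably_computes N d f"
    using oc unfolding obliviously_computes_def by auto
  let ?Y = "outp N"
  define D_input where "D_input = (\<lambda>s. \<Sum>k<d. if s = inp N k then D k else 0)"
  have run_D: "reachable N (init_config N d (\<lambda>k. z k + D k)) (\<lambda>s. B s + D_input s)"
    if "reachable N (init_config N d z) B" for z B
    unfolding init_config_add D_input_def using reachable_add[OF that] .
  obtain E where E: "reachable N (\<lambda>s. C s + D_input s) E" "E ?Y = f (\<lambda>k. x k + D k)"
    using stably_computesE[OF sc natvec_add[OF nv(1,3)] run_D[OF run(1)]] by blast
  have "(\<lambda>s. (C s + D_input s) + (C' s - C s)) = (\<lambda>s. C' s + D_input s)"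
    using le by (auto simp: le_fun_def)
  then have "reachable N (\<lambda>s. C' s + D_input s) (\<lambda>s. E s + (C' s - C s))"
    using reachable_add[OF E(1), of "\<lambda>s. C' s - C s"] by simp
  with run_D[OF run(2)]
  have "reachable N (init_config N d (\<lambda>k. x' k + D k)) (\<lambda>s. E s + (C' s - C s))"
    by (rule reachable_trans)
  then obtain F
    where F: "reachable N (\<lambda>s. E s + (C' s - C s)) F" "F ?Y = f (\<lambda>k. x' k + D k)"
    using stably_computesE[OF sc natvec_add[OF nv(2,3)]] by blast
  have "E ?Y + (C' ?Y - C ?Y) \<le> F ?Y"
    using reachable_output_mono[OF oo F(1)] .
  moreover have "C ?Y \<le> C' ?Y"
    using le by (simp add: le_fun_def)
  ultimately show ?thesis
    using E(2) F(2) out by linarith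
qed

lemma obliviously_computes_comparable_runs:
  fixes x :: "nat \<Rightarrow> nat \<Rightarrow> nat"
  assumes oc: "obliviously_computes N d f" and nv: "\<forall>k. x k \<in> natvec d"
  obtains i j C C' where "i < j"
    "reachable N (init_config N d (x i)) C" "reachable N (init_config N d (x j)) C'" "C \<le> C'"
    "C (outp N) = f (x i)" "C' (outp N) = f (x j)"
proof -
  have wf: "wf_crn N d" and sc: "stably_computes N d f"
    using oc unfolding obliviously_computes_def by auto
  have "\<forall>i. \<exists>C. reachable N (init_config N d (x i)) C \<and> C (outp N) = f (x i)"
    using stably_computesE[OF sc nv[rule_format] reachable_refl] by blast
  from choice[OF this] obtain Out
    where "\<forall>i. reachable N (init_config N d (x i)) (Out i) \<and> Out i (outp N) = f (x i)" ..
  then have run: "\<And>i. reachable N (init_config N d (x i)) (Out i)"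
    and out: "\<And>i. Out i (outp N) = f (x i)"
    by auto
  have "finite (species N)"
    using wf by (simp add: wf_crn_def)
  then obtain i j where "i < j" and le_species: "\<forall>s\<in>species N. Out i s \<le> Out j s"
    using dickson_pair[of "species N" Out] by blast
  have "Out i \<le> Out j"
  proof (rule le_funI)
    fix s
    show "Out i s \<le> Out j s"
      using le_species reachable_from_init_config_support[OF wf run, of s i]
      by (cases "s \<in> species N") simp_all
  qed
  with \<open>i < j\<close> run out that show thesis
    by blast
qed

theorem lemma9:
  fixes f :: "(nat \<Rightarrow> nat) \<Rightarrow> nat" and d :: nat and a :: "nat \<Rightarrow> nat \<Rightarrow> nat"
    and N :: "'a crn"
  assumes "\<forall>k. a k \<in> natvec d"
    and "\<forall>i j. i < j \<longrightarrow> a i \<le> a j"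
    and "\<forall>i j. i < j \<longrightarrow> (\<exists>D \<in> natvec d.
           int (f (\<lambda>k. a i k + D k)) - int (f (a i)) > int (f (\<lambda>k. a j k + D k)) - int (f (a j)))"
  shows "\<not> obliviously_computes N d f"
proof
  assume oc: "obliviously_computes N d f"
  then obtain i j C C' where "i < j"
    "reachable N (init_config N d (a i)) C" "reachable N (init_config N d (a j)) C'" "C \<le> C'"
    "C (outp N) = f (a i)" "C' (outp N) = f (a j)"
    using obliviously_computes_comparable_runs assms(1) by blast
  moreover obtain D where D: "D \<in> natvec d"
    "int (f (\<lambda>k. a i k + D k)) - int (f (a i)) > int (f (\<lambda>k. a j k + D k)) - int (f (a j))"
    using assms(3) \<open>i < j\<close> by blast
  ultimately have
    "int (f (\<lambda>k. a i k + D k)) - int (f (a i)) \<le> int (f (\<lambda>k. a j k + D k)) - int (f (a j))"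
    using obliviously_computes_increment_mono[of N d f "a i" "a j" D C C'] oc assms(1) by blast
  with D(2) show False
    by linarith
qed

end
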